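(* Let $$A= \begin{pmatrix} 1& -2& 2\\ 2&-1& 2\\ 2&-2& 3 \end{pmatrix}.$$ For every positive integer $n$, writing $A^n(3,4,5)^\top=(x,y,z)^\top$, the circumradius of the triangle with side lengths $x,y,z$ is $R_n=n^2+3n+\frac52$.
   Context: Triples are regarded as row vectors and $\top$ denotes transpose. The triple $A^n(3,4,5)^\top$ is a primitive Pythagorean triple (positive integers with $x^2+y^2=z^2$), so the triangle is a right triangle with hypotenuse $z$. *)

theory Defs
  imports "HOL-Analysis.Analysis"
begin

definition A_mat :: "int^3^3" where
  "A_mat = vector [vector [1, -2, 2], vector [2, -1, 2], vector [2, -2, 3]]"

definition mat_pow :: "int^3^3 \<Rightarrow> nat \<Rightarrow> int^3^3" where
  "mat_pow M n = (((**) M) ^^ n) (mat 1)"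

definition tri_area :: "real \<Rightarrow> real \<Rightarrow> real \<Rightarrow> real" where
  "tri_area a b c = (let s = (a + b + c) / 2 in sqrt (s * (s - a) * (s - b) * (s - c)))"

definition circumradius :: "real \<Rightarrow> real \<Rightarrow> real \<Rightarrow> real" where
  "circumradius a b c = a * b * c / (4 * tri_area a b c)"

end

theory Submission
  imports Defs
begin

text \<open>By induction, \<open>A\<^sup>n (3,4,5)\<^sup>T = (2n+3, 2n\<^sup>2+6n+4, 2n\<^sup>2+6n+5)\<^sup>T\<close>, a right triangle
  with hypotenuse \<open>2n\<^sup>2+6n+5\<close>. Heron's formula gives area \<open>xy/2\<close> for a right triangle,
  so \<open>R = xyz/(4 \<cdot> xy/2) = z/2\<close> (Thales).\<close>

lemma mat_pow_Suc_mult_vector: "mat_pow M (Suc n) *v v = M *v (mat_pow M n *v v)"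
  by (simp add: mat_pow_def matrix_vector_mul_assoc)

lemma A_mat_mult_vector:
  "A_mat *v vector [a, b, c] = vector [a - 2*b + 2*c, 2*a - b + 2*c, 2*a - 2*b + 3*c]"
  unfolding A_mat_def
  by (simp add: vec_eq_iff forall_3 matrix_vector_mult_def sum_3 vector_1 vector_2 vector_3)

lemma A_mat_pow_mult_345:
  "mat_pow A_mat n *v vector [3, 4, 5] =
     vector [2 * int n + 3, 2 * int n ^ 2 + 6 * int n + 4, 2 * int n ^ 2 + 6 * int n + 5]"
proof (induction n)
  case 0
  show ?case by (simp add: mat_pow_def)
next
  case (Suc n)
  show ?case
    unfolding mat_pow_Suc_mult_vector Suc A_mat_mult_vector
    by (simp add: algebra_simps power2_eq_square)
qed

lemma tri_area_right:
  fixes a b c :: real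
  assumes "a > 0" "b > 0" "a\<^sup>2 + b\<^sup>2 = c\<^sup>2"
  shows "tri_area a b c = a * b / 2"
proof -
  let ?s = "(a + b + c) / 2"
  have "?s * (?s - a) * (?s - b) * (?s - c) = (a * b / 2)\<^sup>2"
    using assms(3) by (simp add: field_simps power2_eq_square) algebra
  then show ?thesis
    using assms(1,2) unfolding tri_area_def Let_def by simp
qed

lemma circumradius_right:
  fixes a b c :: real
  assumes "a > 0" "b > 0" "a\<^sup>2 + b\<^sup>2 = c\<^sup>2"
  shows "circumradius a b c = c / 2"
  using assms by (simp add: circumradius_def tri_area_right)

theorem mainTheorem7:
  fixes n :: nat
  assumes "n \<ge> 1"
  shows "let v = mat_pow A_mat n *v vector [3, 4, 5]
         in circumradius (of_int (v $ 1)) (of_int (v $ 2)) (of_int (v $ 3))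
              = real n ^ 2 + 3 * real n + 5 / 2"
proof -
  have "circumradius (2 * real n + 3) (2 * real n ^ 2 + 6 * real n + 4)
          (2 * real n ^ 2 + 6 * real n + 5) = (2 * real n ^ 2 + 6 * real n + 5) / 2"
    by (rule circumradius_right) (auto simp: algebra_simps power2_eq_square add_pos_nonneg)
  then show ?thesis
    unfolding A_mat_pow_mult_345 Let_def by (simp add: vector_1 vector_2 vector_3)
qed

end
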